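(* Let $\mathcal T$ be an oscillating tableau of length $r$ and let $(\iota,T)$ be its image under Sundaram's first bijection. Then $\mathrm{Des}(\mathcal T)=\mathrm{Des}(\iota,T)$.
   Context: An oscillating tableau of length $r$ is a sequence of partitions $(\emptyset=\mu^0,\dots,\mu^r)$ with consecutive Ferrers diagrams (English notation) differing by exactly one box; step $k$ is an expansion or contraction according as the box $b_k$ is added or removed. $\mathrm{Des}(\mathcal T)$ is the set of $k\in\{1,\dots,r-1\}$ such that (i) step $k$ is an expansion and step $k+1$ a contraction, or (ii) both are expansions and $b_k$ is in a row strictly above $b_{k+1}$, or (iii) both are contractions and $b_k$ is in a row strictly below $b_{k+1}$. A partial Young tableau is a filling of a Ferrers shape by distinct positive integers increasing along rows and columns. Column deletion of the entry $y$ in a corner box in column $j$: remove it, then for columns $j-1,\dots,1$ in turn replace the largest entry smaller than the current $y$ by $y$ and let $y$ be the replaced entry; the final $y$ is the output $x$. Sundaram's first bijection: set $\iota_0=T_0=\emptyset$; for $k=1,\dots,r$, if step $k$ is an expansion then $\iota_k=\iota_{k-1}$ and $T_k$ is $T_{k-1}$ with $k$ placed in $b_k$; if a contraction, column-delete the entry of $b_k$ from $T_{k-1}$ getting $x$ and $T_k$, and let $\iota_k=\iota_{k-1}$ with the transposition $(x,k)$ adjoined. The output is $(\iota,T)=(\iota_r,T_r)$, where $\iota$ is a fixed-point-free involution on a set $A\subseteq\{1,\dots,r\}$ and $T$ has entry set $\{1,\dots,r\}\setminus A$. Descents: for a bijection $\iota:A\to A$, $\mathrm{Des}(\iota)=\{k: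 k,k+1\in A,\ \iota(k)>\iota(k+1)\}$; for a partial tableau $T$ with entry set $B$, $\mathrm{Des}(T)=\{k:k,k+1\in B,\ k+1 \text{ in a row strictly below } k\}$; for sets $X,Y$, $\mathrm{Des}(X/Y)=\{k: k\in X,\ k+1\in Y\}$, and $\mathrm{Des}(T/\iota)$ means $\mathrm{Des}(B/A)$. Finally $\mathrm{Des}(\iota,T)=\mathrm{Des}(\iota)\cup\mathrm{Des}(T)\cup\mathrm{Des}(T/\iota)$ (a disjoint union). *)

theory Defs
  imports Main
begin

text \<open>Cells are pairs (row, column), 0-indexed, English notation: row 0 is the top row,
  so "row i strictly above row i'" means i < i'.  A partition is represented by its
  Ferrers diagram, a finite down-closed set of cells.\<close>

type_synonym cell = "nat \<times> nat"
type_synonym diagram = "cell set"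
type_synonym tab = "cell \<Rightarrow> nat option"

definition ferrers :: "diagram \<Rightarrow> bool" where
  "ferrers D \<longleftrightarrow> finite D \<and>
     (\<forall>i j i' j'. (i, j) \<in> D \<and> i' \<le> i \<and> j' \<le> j \<longrightarrow> (i', j') \<in> D)"

definition osc_tableau :: "nat \<Rightarrow> diagram list \<Rightarrow> bool" where
  "osc_tableau r mus \<longleftrightarrow> length mus = Suc r \<and> mus ! 0 = {} \<and>
     (\<forall>k \<le> r. ferrers (mus ! k)) \<and>
     (\<forall>k \<in> {1..r}. \<exists>b. (mus ! (k - 1) - mus ! k) \<union> (mus ! k - mus ! (k - 1)) = {b})"

definition box :: "diagram list \<Rightarrow> nat \<Rightarrow> cell" where
  "box mus k = (THE b. b \<in> (mus ! (k - 1) - mus ! k) \<union> (mus ! k - mus ! (k - 1)))"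

definition expansion :: "diagram list \<Rightarrow> nat \<Rightarrow> bool" where
  "expansion mus k \<longleftrightarrow> box mus k \<in> mus ! k"

definition contraction :: "diagram list \<Rightarrow> nat \<Rightarrow> bool" where
  "contraction mus k \<longleftrightarrow> box mus k \<in> mus ! (k - 1)"

definition Des_osc :: "nat \<Rightarrow> diagram list \<Rightarrow> nat set" where
  "Des_osc r mus = {k \<in> {1..r - 1}.
      (expansion mus k \<and> contraction mus (k + 1))
    \<or> (expansion mus k \<and> expansion mus (k + 1) \<and> fst (box mus k) < fst (box mus (k + 1)))
    \<or> (contraction mus k \<and> contraction mus (k + 1) \<and> fst (box mus k) > fst (box mus (k + 1)))}"

definition partial_young :: "tab \<Rightarrow> bool" where
  "partial_young T \<longleftrightarrow> ferrers (dom T) \<and> inj_on T (dom T) \<and> 0 \<notin> ran T \<and>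
     (\<forall>i j v w. T (i, j) = Some v \<and> T (i, Suc j) = Some w \<longrightarrow> v < w) \<and>
     (\<forall>i j v w. T (i, j) = Some v \<and> T (Suc i, j) = Some w \<longrightarrow> v < w)"

text \<open>bump T c y processes columns c-1, ..., 0 (0-indexed) in turn: in the current
  column, replace the largest entry smaller than y by y, and continue with the
  replaced entry.\<close>
fun bump :: "tab \<Rightarrow> nat \<Rightarrow> nat \<Rightarrow> tab \<times> nat" where
  "bump T 0 y = (T, y)"
| "bump T (Suc c) y =
     (let v = Max {v. \<exists>i. T (i, c) = Some v \<and> v < y};
          i = (THE i. T (i, c) = Some v)
      in bump (T((i, c) := Some y)) c v)"

definition col_delete :: "tab \<Rightarrow> cell \<Rightarrow> tab \<times> nat" where
  "col_delete T b = bump (T(b := None)) (snd b) (the (T b))"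

text \<open>Sundaram's first bijection, state after step k: (iota_k, T_k), where the
  involution iota is a partial map with domain A.\<close>
fun sundaram :: "diagram list \<Rightarrow> nat \<Rightarrow> (nat \<rightharpoonup> nat) \<times> tab" where
  "sundaram mus 0 = (Map.empty, Map.empty)"
| "sundaram mus (Suc k) =
     (let (\<iota>, T) = sundaram mus k; b = box mus (Suc k) in
      if expansion mus (Suc k) then (\<iota>, T(b \<mapsto> Suc k))
      else (let (T', x) = col_delete T b in (\<iota>(x \<mapsto> Suc k, Suc k \<mapsto> x), T')))"

definition Des_inv :: "(nat \<rightharpoonup> nat) \<Rightarrow> nat set" where
  "Des_inv \<iota> = {k. k \<in> dom \<iota> \<and> Suc k \<in> dom \<iota> \<and> the (\<iota> k) > the (\<iota> (Suc k))}"

definition row_of :: "tab \<Rightarrow> nat \<Rightarrow> nat" where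
  "row_of T v = (THE i. \<exists>j. T (i, j) = Some v)"

definition Des_tab :: "tab \<Rightarrow> nat set" where
  "Des_tab T = {k. k \<in> ran T \<and> Suc k \<in> ran T \<and> row_of T (Suc k) > row_of T k}"

definition Des_sets :: "nat set \<Rightarrow> nat set \<Rightarrow> nat set" where
  "Des_sets X Y = {k. k \<in> X \<and> Suc k \<in> Y}"

definition Des_pair :: "(nat \<rightharpoonup> nat) \<times> tab \<Rightarrow> nat set" where
  "Des_pair p = (case p of (\<iota>, T) \<Rightarrow> Des_inv \<iota> \<union> Des_tab T \<union> Des_sets (ran T) (dom \<iota>))"

end

theory Submission
  imports Defs
begin

text \<open>
  Whether k is a descent of the pair (iota, T) is settled once step k + 1 of the bijection has
  been performed; later steps never change it. An expansion only adds a new, larger entry; a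
  contraction pairs the new value with the output x of a column deletion. Column deletion keeps
  the relative rows of any two consecutive entries a, a + 1 that stay in the tableau, because the
  values moving from column to column never pass the row of a neighbour; and when x is a or a + 1,
  pairing it with the new value reproduces exactly its old descent status.

  At step k + 1 itself the descent rules (i)-(iii) can be read off directly, except for two
  successive contractions. There, comparing the two bumping paths column by column shows that the
  second output is smaller than the first exactly when the second box lies strictly above the
  first.
\<close>

section \<open>Increasing fillings\<close>

lemma ferrers_downward: "ferrers D \<Longrightarrow> (i, j) \<in> D \<Longrightarrow> i' \<le> i \<Longrightarrow> j' \<le> j \<Longrightarrow> (i', j') \<in> D"
  unfolding ferrers_def by blast

lemma ferrers_finite: "ferrers D \<Longrightarrow> finite D"
  unfolding ferrers_def by blast

text \<open>The transitive form of the row and column conditions of partial_young;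
  on Ferrers shapes the two agree.\<close>

definition increasing_tab :: "tab \<Rightarrow> bool" where
  "increasing_tab T \<longleftrightarrow> inj_on T (dom T) \<and>
     (\<forall>i j i' j' v w. T (i, j) = Some v \<longrightarrow> T (i', j') = Some w \<longrightarrow>
        i \<le> i' \<longrightarrow> j \<le> j' \<longrightarrow> (i, j) \<noteq> (i', j') \<longrightarrow> v < w)"

lemma increasing_tabD:
  "increasing_tab T \<Longrightarrow> T (i, j) = Some v \<Longrightarrow> T (i', j') = Some w \<Longrightarrow>
    i \<le> i' \<Longrightarrow> j \<le> j' \<Longrightarrow> (i, j) \<noteq> (i', j') \<Longrightarrow> v < w"
  unfolding increasing_tab_def by blast

lemma increasing_tab_inj: "increasing_tab T \<Longrightarrow> T a = Some v \<Longrightarrow> T b = Some v \<Longrightarrow> a = b"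
  unfolding increasing_tab_def inj_on_def by (metis domI)

lemma increasing_tab_empty: "increasing_tab Map.empty"
  unfolding increasing_tab_def by simp

lemma increasing_tab_delete: "increasing_tab T \<Longrightarrow> increasing_tab (T(b := None))"
  unfolding increasing_tab_def inj_on_def by (auto split: if_splits)

lemma increasing_tab_update:
  assumes T: "increasing_tab T" and fresh: "y \<notin> ran (T(b := None))"
    and before: "\<And>i j v. T (i, j) = Some v \<Longrightarrow> i \<le> fst b \<Longrightarrow> j \<le> snd b \<Longrightarrow> (i, j) \<noteq> b \<Longrightarrow> v < y"
    and after: "\<And>i j w. T (i, j) = Some w \<Longrightarrow> fst b \<le> i \<Longrightarrow> snd b \<le> j \<Longrightarrow> (i, j) \<noteq> b \<Longrightarrow> y < w"
  shows "increasing_tab (T(b \<mapsto> y))"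
  unfolding increasing_tab_def
proof (intro conjI allI impI)
  have other: "T z \<noteq> Some y" if "z \<noteq> b" for z
  proof
    assume "T z = Some y"
    then have "(T(b := None)) z = Some y" using that by simp
    then show False using fresh by (blast intro: ranI)
  qed
  show "inj_on (T(b \<mapsto> y)) (dom (T(b \<mapsto> y)))"
    unfolding inj_on_def
  proof (intro ballI impI)
    fix a c assume "a \<in> dom (T(b \<mapsto> y))" "(T(b \<mapsto> y)) a = (T(b \<mapsto> y)) c"
    then obtain v where "(T(b \<mapsto> y)) a = Some v" "(T(b \<mapsto> y)) c = Some v"
      by (metis domD)
    then show "a = c"
      using other[of a] other[of c] increasing_tab_inj[OF T, of a v c]
      by (cases "a = b"; cases "c = b") auto
  qed
next
  fix i j i' j' v w
  assume v: "(T(b \<mapsto> y)) (i, j) = Some v" and w: "(T(b \<mapsto> y)) (i', j') = Some w"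
    and le: "i \<le> i'" "j \<le> j'" and ne: "(i, j) \<noteq> (i', j')"
  show "v < w"
  proof (cases "(i, j) = b")
    case True
    then show ?thesis using v w ne le after[of i' j' w] by auto
  next
    case False
    show ?thesis
    proof (cases "(i', j') = b")
      case True
      then show ?thesis using v w False le before[of i j v] by auto
    next
      case False
      then show ?thesis using v w \<open>(i, j) \<noteq> b\<close> le ne increasing_tabD[OF T] by auto
    qed
  qed
qed

lemma increasing_tab_extend:
  assumes T: "increasing_tab T" and D: "ferrers (dom T)" and b: "b \<notin> dom T"
    and less: "\<And>v. v \<in> ran T \<Longrightarrow> v < n"
  shows "increasing_tab (T(b \<mapsto> n))"
proof (rule increasing_tab_update[OF T])
  show "n \<notin> ran (T(b := None))"
    using less by (auto simp: ran_def)
  show "v < n" if "T (i, j) = Some v" for i j v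
    using less that by (auto simp: ran_def)
  show "n < w" if "T (i, j) = Some w" "fst b \<le> i" "snd b \<le> j" for i j w
    using ferrers_downward[OF D, of i j "fst b" "snd b"] b that by auto
qed

lemma row_of_eq: "increasing_tab T \<Longrightarrow> T (i, j) = Some w \<Longrightarrow> row_of T w = i"
  unfolding row_of_def by (blast intro: the_equality dest: increasing_tab_inj)

lemma row_of_cong: "(\<And>z. T z = Some w \<longleftrightarrow> T' z = Some w) \<Longrightarrow> row_of T' w = row_of T w"
  unfolding row_of_def by simp

section \<open>Column deletion, one column at a time\<close>

text \<open>The state of column deletion before a column is processed: the value y in transit is not an
  entry of T, but may be placed at (p, c).\<close>

definition bump_inv :: "tab \<Rightarrow> nat \<Rightarrow> nat \<Rightarrow> nat \<Rightarrow> bool" where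
  "bump_inv T c p y \<longleftrightarrow> ferrers (dom T) \<and> ferrers (dom (T((p, c) \<mapsto> y))) \<and>
     increasing_tab T \<and> increasing_tab (T((p, c) \<mapsto> y)) \<and> y \<notin> ran T \<and>
     (\<forall>B. T (p, c) = Some B \<longrightarrow> y < B)"

lemma bump_inv_less_below_right:
  assumes I: "bump_inv T c p y" and a: "T (r, s) = Some a" and "p \<le> r" "c \<le> s"
  shows "y < a"
proof (cases "(r, s) = (p, c)")
  case True
  then show ?thesis using I a unfolding bump_inv_def by auto
next
  case False
  have "increasing_tab (T((p, c) \<mapsto> y))" using I unfolding bump_inv_def by blast
  from increasing_tabD[OF this, of p c y r s a] False a \<open>p \<le> r\<close> \<open>c \<le> s\<close> show ?thesis by auto
qed

lemma bump_inv_entry_between: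
  assumes I: "bump_inv T c p y" and a: "T (r, s) = Some a" and "p < r" "c \<le> s"
  obtains B where "T (p, c) = Some B" "y < B" "B < a"
proof -
  have D: "ferrers (dom T)" and T: "increasing_tab T" using I unfolding bump_inv_def by blast+
  have "(p, c) \<in> dom T" using ferrers_downward[OF D, of r s p c] a assms(3,4) by auto
  then obtain B where B: "T (p, c) = Some B" by auto
  moreover have "y < B" using B I unfolding bump_inv_def by blast
  moreover have "B < a" using increasing_tabD[OF T B a] assms(3,4) by auto
  ultimately show ?thesis using that by blast
qed

definition column_entries :: "tab \<Rightarrow> nat \<Rightarrow> nat set" where
  "column_entries T c = {v. \<exists>i. T (i, c) = Some v}"

definition bumped_entry :: "tab \<Rightarrow> nat \<Rightarrow> nat \<Rightarrow> nat" where
  "bumped_entry T c y = Max {v. \<exists>i. T (i, c) = Some v \<and> v < y}"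

lemma bumped_entry:
  assumes "finite (ran T)" and "T (i, c) = Some w" and "w < y"
  shows "bumped_entry T c y \<in> column_entries T c" and "bumped_entry T c y < y"
    and "\<And>z. z \<in> column_entries T c \<Longrightarrow> z < y \<Longrightarrow> z \<le> bumped_entry T c y"
proof -
  let ?S = "{v. \<exists>i. T (i, c) = Some v \<and> v < y}"
  have "?S \<subseteq> ran T" unfolding ran_def by blast
  then have S: "finite ?S" using assms(1) finite_subset by blast
  have "?S \<noteq> {}" using assms(2,3) by blast
  from Max_in[OF S this] show "bumped_entry T c y \<in> column_entries T c" "bumped_entry T c y < y"
    unfolding bumped_entry_def column_entries_def by auto
  show "\<And>z. z \<in> column_entries T c \<Longrightarrow> z < y \<Longrightarrow> z \<le> bumped_entry T c y"
    unfolding bumped_entry_def column_entries_def using Max_ge[OF S] by blast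
qed

lemma increasing_tab_bump:
  assumes I: "bump_inv T (Suc c) p y" and q: "T (q, c) = Some v" "p \<le> q" "v < y"
    and max: "\<And>w. w \<in> column_entries T c \<Longrightarrow> w < y \<Longrightarrow> w \<le> v"
  shows "increasing_tab (T((q, c) \<mapsto> y))"
proof -
  have T: "increasing_tab T" and y: "y \<notin> ran T" using I unfolding bump_inv_def by blast+
  show ?thesis
  proof (rule increasing_tab_update[OF T])
    show "y \<notin> ran (T((q, c) := None))" using y by (auto simp: ran_def)
    show "w < y" if "T (i, j) = Some w" "i \<le> fst (q, c)" "j \<le> snd (q, c)" "(i, j) \<noteq> (q, c)" for i j w
      using increasing_tabD[OF T that(1) q(1)] that(2-4) q(3) by auto
    show "y < w" if w: "T (i, j) = Some w" "fst (q, c) \<le> i" "snd (q, c) \<le> j" "(i, j) \<noteq> (q, c)" for i j w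
    proof (cases "j = c")
      case True
      have "v < w" using increasing_tabD[OF T q(1) w(1)] w(2-4) by auto
      moreover have "w \<noteq> y" using w(1) y by (blast intro: ranI)
      moreover have "\<not> w < y" using max[of w] w(1) True \<open>v < w\<close> unfolding column_entries_def by auto
      ultimately show ?thesis by simp
    next
      case False
      then show ?thesis using bump_inv_less_below_right[OF I w(1)] q(2) w(2,3) by simp
    qed
  qed
qed

lemma bump_step:
  assumes I: "bump_inv T (Suc c) p y"
  defines "v \<equiv> bumped_entry T c y"
  obtains q where "T (q, c) = Some v" "p \<le> q" "v < y"
    "\<And>w. w \<in> column_entries T c \<Longrightarrow> w < y \<Longrightarrow> w \<le> v"
    "bump T (Suc c) y = bump (T((q, c) \<mapsto> y)) c v"
    "bump_inv (T((q, c) \<mapsto> y)) c q v"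
proof -
  have D: "ferrers (dom T)" and D': "ferrers (dom (T((p, Suc c) \<mapsto> y)))"
    and T: "increasing_tab T" and T': "increasing_tab (T((p, Suc c) \<mapsto> y))"
    using I unfolding bump_inv_def by blast+
  obtain v0 where v0: "T (p, c) = Some v0"
    using ferrers_downward[OF D', of p "Suc c" p c] by auto
  have "v0 < y" using increasing_tabD[OF T' _ _, of p c v0 p "Suc c" y] v0 by auto
  note bumped = bumped_entry[OF finite_ran[OF ferrers_finite[OF D]] v0 this, folded v_def]
  obtain q where q: "T (q, c) = Some v" using bumped(1) unfolding column_entries_def by blast
  have "p \<le> q"
  proof (rule ccontr)
    assume "\<not> p \<le> q"
    then have "v < v0" using increasing_tabD[OF T q v0] by auto
    with bumped(3)[of v0] v0 \<open>v0 < y\<close> show False unfolding column_entries_def by auto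
  qed
  have "(THE i. T (i, c) = Some v) = q"
    using q increasing_tab_inj[OF T _ q] by blast
  then have "bump T (Suc c) y = bump (T((q, c) \<mapsto> y)) c v"
    unfolding v_def bumped_entry_def by (simp add: Let_def)
  moreover have "bump_inv (T((q, c) \<mapsto> y)) c q v"
  proof -
    have "(T((q, c) \<mapsto> y))((q, c) \<mapsto> v) = T" using q by (auto simp: fun_eq_iff)
    moreover have "v \<notin> ran (T((q, c) \<mapsto> y))"
      using increasing_tab_inj[OF T _ q] bumped(2) by (auto simp: ran_def)
    moreover note increasing_tab_bump[OF I q \<open>p \<le> q\<close> bumped(2,3)]
    ultimately show ?thesis
      unfolding bump_inv_def using D T q bumped(2) by (auto simp: insert_absorb domI)
  qed
  ultimately show ?thesis using that q \<open>p \<le> q\<close> bumped(2,3) by blast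
qed

lemma ran_update_in_transit:
  assumes I: "bump_inv T c p y" and q: "T (q, c') = Some v"
  shows "ran (T((q, c') \<mapsto> y)) \<union> {v} = ran T \<union> {y}"
proof -
  have "inj_on T (dom T)" "y \<notin> ran T" using I unfolding bump_inv_def increasing_tab_def by blast+
  then have "ran (T((q, c') \<mapsto> y)) = ran T - {v} \<union> {y}"
    using ran_map_upd_Some[of T "(q, c')" v y] q by blast
  with q show ?thesis by (auto intro: ranI)
qed

definition pending_row :: "tab \<Rightarrow> nat \<Rightarrow> nat \<Rightarrow> nat \<Rightarrow> nat" where
  "pending_row T p y w = (if w = y then p else row_of T w)"

lemma pending_row_update:
  assumes T: "increasing_tab T" and T': "increasing_tab (T((q, c) \<mapsto> y))"
    and q: "T (q, c) = Some v" and "v < y"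
  shows "pending_row (T((q, c) \<mapsto> y)) q v w = (if w = y then q else pending_row T p y w)"
proof -
  have y: "row_of (T((q, c) \<mapsto> y)) y = q" using row_of_eq[OF T', of q c y] by simp
  have v: "row_of T v = q" using row_of_eq[OF T q] .
  have "row_of (T((q, c) \<mapsto> y)) w = row_of T w" if "w \<noteq> y" "w \<noteq> v"
    by (rule row_of_cong) (use q that in auto)
  then show ?thesis
    unfolding pending_row_def using \<open>v < y\<close> y v by (cases "w = y"; cases "w = v") auto
qed

lemma bump_step_pred_row:
  assumes I: "bump_inv T (Suc c) p y" and q: "T (q, c) = Some v" "v < y"
    and a: "T (r, s) = Some a" "y = Suc a"
  shows "\<not> (p \<le> r \<and> r < q)"
proof
  assume r: "p \<le> r \<and> r < q"
  have T: "increasing_tab T" using I unfolding bump_inv_def by blast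
  show False
  proof (cases "Suc c \<le> s")
    case True
    then show False using bump_inv_less_below_right[OF I a(1)] r a(2) by auto
  next
    case False
    then have "a < v" using increasing_tabD[OF T a(1) q(1)] r by auto
    then show False using q(2) a(2) by simp
  qed
qed

lemma bump_step_succ_row:
  assumes I: "bump_inv T (Suc c) p y" and q: "T (q, c) = Some v" "v < y"
    and a: "T (r, s) = Some (Suc a)" "y = a"
  shows "\<not> (p < r \<and> r \<le> q)"
proof
  assume r: "p < r \<and> r \<le> q"
  have T: "increasing_tab T" using I unfolding bump_inv_def by blast
  show False
  proof (cases "Suc c \<le> s")
    case True
    then show False using bump_inv_entry_between[OF I a(1)] r a(2) by fastforce
  next
    case False
    then have "Suc a \<le> v" using increasing_tabD[OF T a(1) q(1)] q(1) a(1) r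
      by (cases "(r, s) = (q, c)") auto
    then show False using q(2) a(2) by simp
  qed
qed

text \<open>By the two lemmas above, the moving value never passes the row of its neighbour.\<close>

lemma pending_row_order_step:
  assumes I: "bump_inv T (Suc c) p y" and q: "T (q, c) = Some v" "v < y" "p \<le> q"
    and I': "bump_inv (T((q, c) \<mapsto> y)) c q v"
    and a: "a \<in> ran T \<union> {y}" and a1: "Suc a \<in> ran T \<union> {y}"
  shows "pending_row (T((q, c) \<mapsto> y)) q v a < pending_row (T((q, c) \<mapsto> y)) q v (Suc a)
     \<longleftrightarrow> pending_row T p y a < pending_row T p y (Suc a)"
proof -
  have T: "increasing_tab T" and T': "increasing_tab (T((q, c) \<mapsto> y))"
    using I I' unfolding bump_inv_def by blast+
  note update = pending_row_update[OF T T' q(1,2), of _ p]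
  consider "y = Suc a" | "y = a" | "y \<noteq> a" "y \<noteq> Suc a" by blast
  then show ?thesis
  proof cases
    case 1
    then obtain r s where rs: "T (r, s) = Some a" using a by (auto simp: ran_def)
    then show ?thesis
      using update bump_step_pred_row[OF I q(1,2) rs 1] row_of_eq[OF T rs] 1 q(3)
      unfolding pending_row_def by auto
  next
    case 2
    then obtain r s where rs: "T (r, s) = Some (Suc a)" using a1 by (auto simp: ran_def)
    then show ?thesis
      using update bump_step_succ_row[OF I q(1,2) rs 2] row_of_eq[OF T rs] 2 q(3)
      unfolding pending_row_def by auto
  next
    case 3
    then show ?thesis using update by simp
  qed
qed

lemma bump_pending_rows:
  "bump_inv T c p y \<Longrightarrow> bump T c y = (T', x) \<Longrightarrow>
    \<exists>p'. bump_inv T' 0 p' x \<and> dom T' = dom T \<and> ran T' \<union> {x} = ran T \<union> {y} \<and>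
      (\<forall>a. a \<in> ran T \<union> {y} \<longrightarrow> Suc a \<in> ran T \<union> {y} \<longrightarrow>
        (pending_row T' p' x a < pending_row T' p' x (Suc a) \<longleftrightarrow>
         pending_row T p y a < pending_row T p y (Suc a)))"
proof (induction c arbitrary: T p y)
  case 0
  then show ?case by auto
next
  case (Suc c)
  define v where "v = bumped_entry T c y"
  obtain q where q: "T (q, c) = Some v" "p \<le> q" "v < y"
    and bump: "bump T (Suc c) y = bump (T((q, c) \<mapsto> y)) c v"
    and I': "bump_inv (T((q, c) \<mapsto> y)) c q v"
    using bump_step[OF Suc.prems(1), folded v_def] by blast
  have ran_eq: "ran (T((q, c) \<mapsto> y)) \<union> {v} = ran T \<union> {y}"
    by (rule ran_update_in_transit[OF Suc.prems(1) q(1)])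
  have "bump (T((q, c) \<mapsto> y)) c v = (T', x)" using Suc.prems(2) bump by simp
  from Suc.IH[OF I' this] obtain p' where
    final: "bump_inv T' 0 p' x" and dom: "dom T' = dom (T((q, c) \<mapsto> y))"
    and ran: "ran T' \<union> {x} = ran T \<union> {y}"
    and rows: "\<And>a. a \<in> ran T \<union> {y} \<Longrightarrow> Suc a \<in> ran T \<union> {y} \<Longrightarrow>
       pending_row T' p' x a < pending_row T' p' x (Suc a) \<longleftrightarrow>
       pending_row (T((q, c) \<mapsto> y)) q v a < pending_row (T((q, c) \<mapsto> y)) q v (Suc a)"
    unfolding ran_eq by blast
  show ?case
  proof (intro exI[of _ p'] conjI allI impI)
    show "dom T' = dom T" using dom q(1) by auto
    fix a assume "a \<in> ran T \<union> {y}" "Suc a \<in> ran T \<union> {y}"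
    then show "pending_row T' p' x a < pending_row T' p' x (Suc a) \<longleftrightarrow>
        pending_row T p y a < pending_row T p y (Suc a)"
      using rows pending_row_order_step[OF Suc.prems(1) q(1,3,2) I'] by blast
  qed (use final ran in auto)
qed

section \<open>Column deletion\<close>

lemma bump_inv_col_delete:
  assumes T: "increasing_tab T" and D: "ferrers (dom T)" and b: "T b = Some y"
    and corner: "ferrers (dom T - {b})"
  shows "bump_inv (T(b := None)) (snd b) (fst b) y"
proof -
  have "(T(b := None))((fst b, snd b) \<mapsto> y) = T" using b by (auto simp: fun_eq_iff)
  moreover have "dom (T(b := None)) = dom T - {b}" by auto
  moreover have "y \<notin> ran (T(b := None))"
    using increasing_tab_inj[OF T _ b] by (auto simp: ran_def)
  ultimately show ?thesis
    unfolding bump_inv_def using D corner T increasing_tab_delete[OF T] by auto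
qed

lemma col_delete_pending_rows:
  assumes T: "increasing_tab T" and D: "ferrers (dom T)" and b: "b \<in> dom T"
    and corner: "ferrers (dom T - {b})" and cd: "col_delete T b = (T', x)"
  obtains p' where "bump_inv T' 0 p' x" "dom T' = dom T - {b}" "ran T' \<union> {x} = ran T"
    "\<And>a. a \<in> ran T \<Longrightarrow> Suc a \<in> ran T \<Longrightarrow>
       pending_row T' p' x a < pending_row T' p' x (Suc a) \<longleftrightarrow> row_of T a < row_of T (Suc a)"
proof -
  obtain y where y: "T b = Some y" using b by auto
  have "bump (T(b := None)) (snd b) y = (T', x)" using cd y unfolding col_delete_def by simp
  from bump_pending_rows[OF bump_inv_col_delete[OF T D y corner] this] obtain p' where
    final: "bump_inv T' 0 p' x" and dom: "dom T' = dom (T(b := None))"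
    and ran: "ran T' \<union> {x} = ran (T(b := None)) \<union> {y}"
    and rows: "\<forall>a. a \<in> ran (T(b := None)) \<union> {y} \<longrightarrow> Suc a \<in> ran (T(b := None)) \<union> {y} \<longrightarrow>
        (pending_row T' p' x a < pending_row T' p' x (Suc a) \<longleftrightarrow>
         pending_row (T(b := None)) (fst b) y a < pending_row (T(b := None)) (fst b) y (Suc a))"
    by blast
  have "ran ((T(b := None))(b \<mapsto> y)) = insert y (ran (T(b := None)))"
    by (rule ran_map_upd) simp
  moreover have "(T(b := None))(b \<mapsto> y) = T" using y by (simp add: fun_eq_iff)
  ultimately have ran_T: "ran (T(b := None)) \<union> {y} = ran T" by auto
  have "pending_row (T(b := None)) (fst b) y w = row_of T w" for w
  proof (cases "w = y")
    case True
    then show ?thesis unfolding pending_row_def using row_of_eq[OF T, of "fst b" "snd b" y] y by simp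
  next
    case False
    have "row_of (T(b := None)) w = row_of T w" by (rule row_of_cong) (use False y in auto)
    then show ?thesis unfolding pending_row_def using False by simp
  qed
  then show ?thesis using that[OF final] dom ran rows unfolding ran_T by auto
qed

lemma col_delete_shape:
  assumes T: "increasing_tab T" and D: "ferrers (dom T)" and b: "b \<in> dom T"
    and corner: "ferrers (dom T - {b})" and cd: "col_delete T b = (T', x)"
  shows "increasing_tab T'" "dom T' = dom T - {b}" "x \<in> ran T" "ran T' = ran T - {x}"
proof -
  obtain p' where final: "bump_inv T' 0 p' x" and "dom T' = dom T - {b}"
    and ran: "ran T' \<union> {x} = ran T"
    by (rule col_delete_pending_rows[OF assms])
  moreover have "x \<notin> ran T'" using final unfolding bump_inv_def by blast
  ultimately show "increasing_tab T'" "dom T' = dom T - {b}" "x \<in> ran T" "ran T' = ran T - {x}"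
    unfolding bump_inv_def by blast+
qed

text \<open>At the end the output x sits, virtually, in column 0; an entry between x and its neighbour
  would have to lie in column 0 too, which is impossible.\<close>

lemma col_delete_row_order:
  assumes T: "increasing_tab T" and D: "ferrers (dom T)" and b: "b \<in> dom T"
    and corner: "ferrers (dom T - {b})" and cd: "col_delete T b = (T', x)"
    and a: "a \<in> ran T" "Suc a \<in> ran T"
  shows "x \<noteq> a \<Longrightarrow> x \<noteq> Suc a \<Longrightarrow>
      row_of T' a < row_of T' (Suc a) \<longleftrightarrow> row_of T a < row_of T (Suc a)"
    and "x = Suc a \<Longrightarrow> row_of T a < row_of T (Suc a)"
    and "x = a \<Longrightarrow> \<not> row_of T a < row_of T (Suc a)"
proof -
  obtain p' where final: "bump_inv T' 0 p' x" and ran: "ran T' \<union> {x} = ran T"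
    and rows: "pending_row T' p' x a < pending_row T' p' x (Suc a) \<longleftrightarrow> row_of T a < row_of T (Suc a)"
    using col_delete_pending_rows[OF T D b corner cd] a by metis
  have T': "increasing_tab T'" using final unfolding bump_inv_def by blast
  show "x \<noteq> a \<Longrightarrow> x \<noteq> Suc a \<Longrightarrow>
      row_of T' a < row_of T' (Suc a) \<longleftrightarrow> row_of T a < row_of T (Suc a)"
    using rows unfolding pending_row_def by simp
  show "row_of T a < row_of T (Suc a)" if "x = Suc a"
  proof -
    have "a \<noteq> x" using that by simp
    then have "a \<in> ran T'" using a(1) ran by blast
    then obtain r s where rs: "T' (r, s) = Some a" by (auto simp: ran_def)
    have "\<not> p' \<le> r" using bump_inv_less_below_right[OF final rs] that by auto
    then show ?thesis using rows row_of_eq[OF T' rs] that unfolding pending_row_def by simp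
  qed
  show "\<not> row_of T a < row_of T (Suc a)" if "x = a"
  proof -
    have "Suc a \<noteq> x" using that by simp
    then have "Suc a \<in> ran T'" using a(2) ran by blast
    then obtain r s where rs: "T' (r, s) = Some (Suc a)" by (auto simp: ran_def)
    have "\<not> p' < r" using bump_inv_entry_between[OF final rs] that by fastforce
    then show ?thesis using rows row_of_eq[OF T' rs] that unfolding pending_row_def by simp
  qed
qed

section \<open>The bumping path\<close>

text \<open>For d < c, bump_path T c y d is the value in transit once the columns c - 1, ..., d have
  been processed; it is the entry bumped out of column d.\<close>

fun bump_path :: "tab \<Rightarrow> nat \<Rightarrow> nat \<Rightarrow> nat \<Rightarrow> nat" where
  "bump_path T 0 y d = y"
| "bump_path T (Suc c) y d = (if d = Suc c then y else bump_path T c (bumped_entry T c y) d)"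

lemma bump_path_start: "bump_path T c y c = y"
  by (cases c) auto

lemma bump_path_Suc: "d \<le> c \<Longrightarrow> bump_path T (Suc c) y d = bump_path T c (bumped_entry T c y) d"
  by simp

lemma bump_path_cong:
  "(\<And>i d. d < c \<Longrightarrow> T' (i, d) = T (i, d)) \<Longrightarrow> bump_path T' c y d = bump_path T c y d"
proof (induction c arbitrary: y)
  case (Suc c)
  have "bumped_entry T' c y = bumped_entry T c y" unfolding bumped_entry_def using Suc.prems by simp
  then show ?case using Suc by simp
qed simp

lemma column_entries_update_other:
  "d \<noteq> c \<Longrightarrow> column_entries (T((q, c) := z)) d = column_entries T d"
  unfolding column_entries_def by auto

lemma column_entries_update:
  assumes T: "increasing_tab T" and q: "T (q, c) = Some v"
  shows "column_entries (T((q, c) \<mapsto> y)) c = column_entries T c - {v} \<union> {y}"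
  unfolding column_entries_def
proof (intro equalityI subsetI)
  fix w assume "w \<in> {w. \<exists>i. (T((q, c) \<mapsto> y)) (i, c) = Some w}"
  then obtain i where i: "(T((q, c) \<mapsto> y)) (i, c) = Some w" by blast
  show "w \<in> {w. \<exists>i. T (i, c) = Some w} - {v} \<union> {y}"
  proof (cases "i = q")
    case True
    then show ?thesis using i by simp
  next
    case False
    then have "T (i, c) = Some w" using i by simp
    moreover from this have "w \<noteq> v" using increasing_tab_inj[OF T _ q] False by blast
    ultimately show ?thesis by blast
  qed
next
  fix w assume "w \<in> {w. \<exists>i. T (i, c) = Some w} - {v} \<union> {y}"
  then consider i where "T (i, c) = Some w" "w \<noteq> v" | "w = y" by blast
  then show "w \<in> {w. \<exists>i. (T((q, c) \<mapsto> y)) (i, c) = Some w}"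
  proof cases
    case (1 i)
    then have "(T((q, c) \<mapsto> y)) (i, c) = Some w" using q by auto
    then show ?thesis by blast
  next
    case 2
    then have "(T((q, c) \<mapsto> y)) (q, c) = Some w" by simp
    then show ?thesis by blast
  qed
qed

definition column_bump :: "tab \<Rightarrow> tab \<Rightarrow> nat \<Rightarrow> nat \<Rightarrow> nat \<Rightarrow> bool" where
  "column_bump T T' d y v \<longleftrightarrow> v \<in> column_entries T d \<and> v < y \<and>
     (\<forall>z \<in> column_entries T d. z < y \<longrightarrow> z \<le> v) \<and>
     column_entries T' d = column_entries T d - {v} \<union> {y}"

lemma bump_path_facts:
  "bump_inv T c p y \<Longrightarrow> bump T c y = (T', x) \<Longrightarrow>
    x = bump_path T c y 0 \<and> (\<forall>i d. c \<le> d \<longrightarrow> T' (i, d) = T (i, d)) \<and>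
    (\<forall>d<c. column_bump T T' d (bump_path T c y (Suc d)) (bump_path T c y d))"
proof (induction c arbitrary: T p y)
  case 0
  then show ?case by auto
next
  case (Suc c)
  define v where "v = bumped_entry T c y"
  obtain q where q: "T (q, c) = Some v" "v < y"
    and max: "\<And>w. w \<in> column_entries T c \<Longrightarrow> w < y \<Longrightarrow> w \<le> v"
    and bump: "bump T (Suc c) y = bump (T((q, c) \<mapsto> y)) c v"
    and I': "bump_inv (T((q, c) \<mapsto> y)) c q v"
    using bump_step[OF Suc.prems(1), folded v_def] by blast
  let ?T = "T((q, c) \<mapsto> y)"
  have T: "increasing_tab T" using Suc.prems(1) unfolding bump_inv_def by blast
  have "bump ?T c v = (T', x)" using Suc.prems(2) bump by simp
  with Suc.IH[OF I'] have x: "x = bump_path ?T c v 0"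
    and right: "\<And>i d. c \<le> d \<Longrightarrow> T' (i, d) = ?T (i, d)"
    and left: "\<And>d. d < c \<Longrightarrow> column_bump ?T T' d (bump_path ?T c v (Suc d)) (bump_path ?T c v d)"
    by blast+
  have path: "bump_path T (Suc c) y d = bump_path ?T c v d" if "d \<le> c" for d
    using bump_path_cong[of c ?T T v d] bump_path_Suc[OF that] v_def by simp
  have "column_bump T T' c y v"
  proof -
    have "column_entries T' c = column_entries ?T c"
      using right[of c] unfolding column_entries_def by simp
    then show ?thesis
      unfolding column_bump_def column_entries_update[OF T q(1)]
      using q max unfolding column_entries_def by blast
  qed
  moreover have "column_bump T T' d (bump_path ?T c v (Suc d)) (bump_path ?T c v d)" if "d < c" for d
    using left[OF that] column_entries_update_other[of d c T q] that
    unfolding column_bump_def by simp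
  ultimately have "column_bump T T' d (bump_path T (Suc c) y (Suc d)) (bump_path T (Suc c) y d)"
    if "d < Suc c" for d
    using that path[of d] path[of "Suc d"] bump_path_start[of ?T c v]
    by (cases "d = c") auto
  then show ?case using x path[of 0] right by auto
qed

lemma col_delete_path:
  assumes T: "increasing_tab T" and D: "ferrers (dom T)" and y: "T (i, j) = Some y"
    and corner: "ferrers (dom T - {(i, j)})" and cd: "col_delete T (i, j) = (T', x)"
  obtains w where "x = w 0" "w j = y"
    "\<And>i' d. j \<le> d \<Longrightarrow> T' (i', d) = (T((i, j) := None)) (i', d)"
    "\<And>d. d < j \<Longrightarrow> column_bump T T' d (w (Suc d)) (w d)"
proof -
  let ?T0 = "T((i, j) := None)"
  have "bump ?T0 j y = (T', x)" using cd y unfolding col_delete_def by simp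
  note facts = bump_path_facts[OF bump_inv_col_delete[OF T D y corner, simplified] this]
  have "column_entries ?T0 d = column_entries T d" if "d < j" for d
    using column_entries_update_other[of d j T i None] that by simp
  then have "column_bump ?T0 T' d = column_bump T T' d" if "d < j" for d
    using that unfolding column_bump_def[abs_def] by simp
  then show ?thesis
    using that[of "bump_path ?T0 j y"] facts bump_path_start by simp
qed

section \<open>Two successive column deletions\<close>

lemma corner_lowest_in_column:
  assumes D: "ferrers D" and corner: "ferrers (D - {(i, j)})" and r: "(r, j) \<in> D"
  shows "r \<le> i"
proof (rule ccontr)
  assume "\<not> r \<le> i"
  then have "(Suc i, j) \<in> D - {(i, j)}" using ferrers_downward[OF D r, of "Suc i" j] by auto
  then show False using ferrers_downward[OF corner, of "Suc i" j i j] by auto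
qed

lemma successive_corners_higher:
  assumes D: "ferrers D" and b1: "(i1, j1) \<in> D" and b2: "(i2, j2) \<in> D - {(i1, j1)}"
    and corner2: "ferrers (D - {(i1, j1)} - {(i2, j2)})" and "i2 < i1"
  shows "j1 \<le> j2"
proof (rule ccontr)
  assume "\<not> j1 \<le> j2"
  then have "(i2, Suc j2) \<in> D - {(i1, j1)} - {(i2, j2)}"
    using ferrers_downward[OF D b1, of i2 "Suc j2"] \<open>i2 < i1\<close> by auto
  then show False using ferrers_downward[OF corner2, of i2 "Suc j2" i2 j2] by auto
qed

lemma successive_corners_not_higher:
  assumes D: "ferrers D" and corner1: "ferrers (D - {(i1, j1)})" and b2: "(i2, j2) \<in> D - {(i1, j1)}"
    and "i1 \<le> i2"
  shows "j2 < j1"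
proof (rule ccontr)
  assume "\<not> j2 < j1"
  then have "(i1, Suc j1) \<in> D \<or> (Suc i1, j1) \<in> D"
    using ferrers_downward[OF D, of i2 j2 i1 "Suc j1"] ferrers_downward[OF D, of i2 j2 "Suc i1" j1]
      b2 \<open>i1 \<le> i2\<close> by (cases "i1 = i2") auto
  then show False
    using ferrers_downward[OF corner1, of i1 "Suc j1" i1 j1] ferrers_downward[OF corner1, of "Suc i1" j1 i1 j1]
    by auto
qed

locale successive_col_deletions =
  fixes T0 T1 T2 :: tab and i1 j1 i2 j2 x1 x2 :: nat
  assumes increasing: "increasing_tab T0" and shape: "ferrers (dom T0)"
    and corner1: "(i1, j1) \<in> dom T0" "ferrers (dom T0 - {(i1, j1)})"
    and corner2: "(i2, j2) \<in> dom T0 - {(i1, j1)}" "ferrers (dom T0 - {(i1, j1)} - {(i2, j2)})"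
    and delete1: "col_delete T0 (i1, j1) = (T1, x1)"
    and delete2: "col_delete T1 (i2, j2) = (T2, x2)"
begin

lemma first_deletion: "increasing_tab T1" "dom T1 = dom T0 - {(i1, j1)}"
  using col_delete_shape[OF increasing shape corner1 delete1] by blast+

lemma second_corner: "ferrers (dom T1)" "(i2, j2) \<in> dom T1" "ferrers (dom T1 - {(i2, j2)})"
  using corner1(2) corner2 first_deletion(2) by auto

lemma output_less_if_higher:
  assumes "i2 < i1"
  shows "x2 < x1"
proof -
  obtain y1 where y1: "T0 (i1, j1) = Some y1" using corner1(1) by auto
  obtain w where "x1 = w 0" and w_start: "w j1 = y1"
    and right: "\<And>i d. j1 \<le> d \<Longrightarrow> T1 (i, d) = (T0((i1, j1) := None)) (i, d)"
    and w: "\<And>d. d < j1 \<Longrightarrow> column_bump T0 T1 d (w (Suc d)) (w d)"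
    using col_delete_path[OF increasing shape y1 corner1(2) delete1] by blast
  obtain y2 where y2: "T1 (i2, j2) = Some y2" using second_corner(2) by auto
  obtain u where "x2 = u 0" and u_start: "u j2 = y2"
    and u: "\<And>d. d < j2 \<Longrightarrow> column_bump T1 T2 d (u (Suc d)) (u d)"
    using col_delete_path[OF first_deletion(1) second_corner(1) y2 second_corner(3) delete2] by blast
  have j1j2: "j1 \<le> j2" by (rule successive_corners_higher[OF shape corner1(1) corner2 \<open>i2 < i1\<close>])
  have "u d < w d" if "d \<le> j1" for d
    using that
  proof (induction d rule: inc_induct)
    case base
    show ?case
    proof (cases "j2 = j1")
      case True
      then have "T0 (i2, j1) = Some y2" using right[of j1 i2] y2 \<open>i2 < i1\<close> by simp
      then have "y2 < y1" using increasing_tabD[OF increasing _ y1] \<open>i2 < i1\<close> by fastforce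
      then show ?thesis using u_start w_start True by simp
    next
      case False
      then obtain r where r: "T1 (r, j1) = Some (u j1)"
        using u[of j1] j1j2 unfolding column_bump_def column_entries_def by auto
      then have r0: "T0 (r, j1) = Some (u j1)" "r \<noteq> i1" using right[of j1 r] by (auto split: if_splits)
      then have "r < i1" using corner_lowest_in_column[OF shape corner1(2), of r] by fastforce
      then show ?thesis using increasing_tabD[OF increasing r0(1) y1] w_start by simp
    qed
  next
    case (step n)
    have "u n < w (Suc n)" "u n \<in> column_entries T1 n"
      using u[of n] step j1j2 unfolding column_bump_def by auto
    then show ?case using w[of n] step unfolding column_bump_def by fastforce
  qed
  from this[of 0] show ?thesis using \<open>x1 = w 0\<close> \<open>x2 = u 0\<close> by simp
qed

lemma output_greater_if_not_higher:
  assumes "\<not> i2 < i1"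
  shows "x1 < x2"
proof -
  obtain y1 where y1: "T0 (i1, j1) = Some y1" using corner1(1) by auto
  have j2j1: "j2 < j1"
    using successive_corners_not_higher[OF shape corner1(2) corner2(1)] assms by simp
  obtain w where "x1 = w 0" and w: "\<And>d. d < j1 \<Longrightarrow> column_bump T0 T1 d (w (Suc d)) (w d)"
    using col_delete_path[OF increasing shape y1 corner1(2) delete1] by blast
  obtain y2 where y2: "T1 (i2, j2) = Some y2" using second_corner(2) by auto
  obtain u where "x2 = u 0" and u_start: "u j2 = y2"
    and u: "\<And>d. d < j2 \<Longrightarrow> column_bump T1 T2 d (u (Suc d)) (u d)"
    using col_delete_path[OF first_deletion(1) second_corner(1) y2 second_corner(3) delete2] by blast
  have w_in: "w (Suc d) \<in> column_entries T1 d" "w d < w (Suc d)" if "d < j1" for d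
    using w[OF that] unfolding column_bump_def by simp_all
  have "w (Suc d) \<le> u d" if "d \<le> j2" for d
    using that
  proof (induction d rule: inc_induct)
    case base
    obtain r where r: "T1 (r, j2) = Some (w (Suc j2))"
      using w_in(1)[OF j2j1] unfolding column_entries_def by blast
    then have "r \<le> i2" using corner_lowest_in_column[OF second_corner(1,3), of r] by blast
    then have "w (Suc j2) \<le> y2" using increasing_tabD[OF first_deletion(1) r y2] r y2
      by (cases "r = i2") auto
    then show ?case using u_start by simp
  next
    case (step n)
    have "w (Suc n) < u (Suc n)" using w_in(2)[of "Suc n"] step j2j1 by simp
    then show ?case using u[of n] w_in(1)[of n] step j2j1 unfolding column_bump_def by simp
  qed
  from this[of 0] show ?thesis using w_in(2)[of 0] j2j1 \<open>x1 = w 0\<close> \<open>x2 = u 0\<close> by simp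
qed

lemma output_less_iff_higher: "x2 < x1 \<longleftrightarrow> i2 < i1"
  using output_less_if_higher output_greater_if_not_higher by fastforce

end

section \<open>Oscillating tableaux and Sundaram's bijection\<close>

lemma osc_tableau_ferrers: "osc_tableau r mus \<Longrightarrow> t \<le> r \<Longrightarrow> ferrers (mus ! t)"
  unfolding osc_tableau_def by blast

lemma sym_diff_singleton:
  assumes "(A - B) \<union> (B - A) = {b}"
  shows "b \<in> B \<Longrightarrow> b \<notin> A \<and> B = insert b A" and "b \<notin> B \<Longrightarrow> b \<in> A \<and> B = A - {b}"
proof -
  have eq: "x \<in> A \<and> x \<notin> B \<or> x \<in> B \<and> x \<notin> A \<longleftrightarrow> x = b" for x
    using assms unfolding set_eq_iff by simp
  show "b \<notin> A \<and> B = insert b A" if "b \<in> B"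
    using eq that unfolding set_eq_iff by (metis insert_iff)
  show "b \<in> A \<and> B = A - {b}" if "b \<notin> B"
    using eq that unfolding set_eq_iff by (metis Diff_iff singleton_iff)
qed

lemma osc_tableau_box:
  assumes "osc_tableau r mus" and "t < r"
  shows "(mus ! t - mus ! Suc t) \<union> (mus ! Suc t - mus ! t) = {box mus (Suc t)}"
proof -
  have "\<forall>k \<in> {1..r}. \<exists>b. (mus ! (k - 1) - mus ! k) \<union> (mus ! k - mus ! (k - 1)) = {b}"
    using assms(1) unfolding osc_tableau_def by blast
  moreover have "Suc t \<in> {1..r}" using assms(2) by simp
  ultimately obtain b where b: "(mus ! t - mus ! Suc t) \<union> (mus ! Suc t - mus ! t) = {b}"
    by fastforce
  moreover from b have "box mus (Suc t) = b" unfolding box_def by simp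
  ultimately show ?thesis by simp
qed

lemma osc_tableau_expansion:
  assumes "osc_tableau r mus" "t < r" "expansion mus (Suc t)"
  shows "box mus (Suc t) \<notin> mus ! t" "mus ! Suc t = insert (box mus (Suc t)) (mus ! t)"
  using sym_diff_singleton(1)[OF osc_tableau_box[OF assms(1,2)]] assms(3)
  unfolding expansion_def by blast+

lemma osc_tableau_contraction:
  assumes "osc_tableau r mus" "t < r" "\<not> expansion mus (Suc t)"
  shows "box mus (Suc t) \<in> mus ! t" "mus ! Suc t = mus ! t - {box mus (Suc t)}"
  using sym_diff_singleton(2)[OF osc_tableau_box[OF assms(1,2)]] assms(3)
  unfolding expansion_def by blast+

lemma osc_tableau_contraction_iff:
  assumes "osc_tableau r mus" "t < r"
  shows "contraction mus (Suc t) \<longleftrightarrow> \<not> expansion mus (Suc t)"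
  using osc_tableau_expansion[OF assms] osc_tableau_contraction[OF assms]
  unfolding contraction_def by auto

lemma sundaram_expansion:
  "sundaram mus t = (\<iota>, T) \<Longrightarrow> expansion mus (Suc t) \<Longrightarrow>
    sundaram mus (Suc t) = (\<iota>, T(box mus (Suc t) \<mapsto> Suc t))"
  by (simp add: Let_def)

lemma sundaram_contraction:
  "sundaram mus t = (\<iota>, T) \<Longrightarrow> \<not> expansion mus (Suc t) \<Longrightarrow> col_delete T (box mus (Suc t)) = (T', x) \<Longrightarrow>
    sundaram mus (Suc t) = (\<iota>(x \<mapsto> Suc t, Suc t \<mapsto> x), T')"
  by (simp add: Let_def)

definition sundaram_inv :: "diagram list \<Rightarrow> nat \<Rightarrow> (nat \<rightharpoonup> nat) \<Rightarrow> tab \<Rightarrow> bool" where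
  "sundaram_inv mus t \<iota> T \<longleftrightarrow> dom T = mus ! t \<and> increasing_tab T \<and>
     ran T \<inter> dom \<iota> = {} \<and> ran T \<union> dom \<iota> = {1..t} \<and> ran \<iota> \<subseteq> {1..t}"

lemma interval_Suc: "{1..Suc t} = insert (Suc t) {1..t}"
  by auto

lemma sundaram_inv_expansion:
  assumes osc: "osc_tableau r mus" and "t < r" and inv: "sundaram_inv mus t \<iota> T"
    and exp: "expansion mus (Suc t)"
  shows "sundaram_inv mus (Suc t) \<iota> (T(box mus (Suc t) \<mapsto> Suc t))"
proof -
  let ?b = "box mus (Suc t)"
  note box = osc_tableau_expansion[OF osc \<open>t < r\<close> exp]
  have dom: "dom T = mus ! t" and T: "increasing_tab T" and disjoint: "ran T \<inter> dom \<iota> = {}"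
    and cover: "ran T \<union> dom \<iota> = {1..t}" and ran_\<iota>: "ran \<iota> \<subseteq> {1..t}"
    using inv unfolding sundaram_inv_def by blast+
  have D: "ferrers (dom T)" using dom osc_tableau_ferrers[OF osc] \<open>t < r\<close> by simp
  have new: "?b \<notin> dom T" using box(1) dom by simp
  have fresh: "Suc t \<notin> ran T \<union> dom \<iota>" unfolding cover by simp
  have ran: "ran (T(?b \<mapsto> Suc t)) = insert (Suc t) (ran T)"
    using new by (intro ran_map_upd) auto
  show ?thesis
    unfolding sundaram_inv_def
  proof (intro conjI)
    show "dom (T(?b \<mapsto> Suc t)) = mus ! Suc t" using dom box(2) by simp
    have "v < Suc t" if "v \<in> ran T" for v
    proof -
      have "v \<in> {1..t}" using that cover by blast
      then show ?thesis by simp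
    qed
    then show "increasing_tab (T(?b \<mapsto> Suc t))" by (rule increasing_tab_extend[OF T D new])
    show "ran (T(?b \<mapsto> Suc t)) \<inter> dom \<iota> = {}" unfolding ran using disjoint fresh by blast
    show "ran (T(?b \<mapsto> Suc t)) \<union> dom \<iota> = {1..Suc t}" unfolding ran interval_Suc cover[symmetric] by blast
    show "ran \<iota> \<subseteq> {1..Suc t}" using ran_\<iota> unfolding interval_Suc by blast
  qed
qed

lemma sundaram_inv_corner:
  assumes osc: "osc_tableau r mus" and "t < r" and inv: "sundaram_inv mus t \<iota> T"
    and con: "\<not> expansion mus (Suc t)"
  shows "ferrers (dom T)" "box mus (Suc t) \<in> dom T" "ferrers (dom T - {box mus (Suc t)})"
proof -
  note box = osc_tableau_contraction[OF osc \<open>t < r\<close> con]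
  have "ferrers (mus ! t)" "ferrers (mus ! Suc t)" using osc_tableau_ferrers[OF osc] \<open>t < r\<close> by auto
  then show "ferrers (dom T)" "box mus (Suc t) \<in> dom T" "ferrers (dom T - {box mus (Suc t)})"
    using inv box unfolding sundaram_inv_def by auto
qed

lemma sundaram_inv_contraction:
  assumes osc: "osc_tableau r mus" and "t < r" and inv: "sundaram_inv mus t \<iota> T"
    and con: "\<not> expansion mus (Suc t)" and cd: "col_delete T (box mus (Suc t)) = (T', x)"
  shows "sundaram_inv mus (Suc t) (\<iota>(x \<mapsto> Suc t, Suc t \<mapsto> x)) T'"
proof -
  note box = osc_tableau_contraction[OF osc \<open>t < r\<close> con]
  have dom: "dom T = mus ! t" and T: "increasing_tab T" and disjoint: "ran T \<inter> dom \<iota> = {}"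
    and cover: "ran T \<union> dom \<iota> = {1..t}" and ran_\<iota>: "ran \<iota> \<subseteq> {1..t}"
    using inv unfolding sundaram_inv_def by blast+
  note shape = col_delete_shape[OF T sundaram_inv_corner[OF osc \<open>t < r\<close> inv con] cd]
  have x: "x \<in> {1..t}" using shape(3) cover by blast
  have fresh: "Suc t \<notin> ran T \<union> dom \<iota>" unfolding cover by simp
  have dom_\<iota>': "dom (\<iota>(x \<mapsto> Suc t, Suc t \<mapsto> x)) = insert x (insert (Suc t) (dom \<iota>))" by auto
  have ran_\<iota>': "ran (\<iota>(x \<mapsto> Suc t, Suc t \<mapsto> x)) \<subseteq> insert x (insert (Suc t) (ran \<iota>))"
    by (auto simp: ran_def)
  show ?thesis
    unfolding sundaram_inv_def
  proof (intro conjI)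
    show "dom T' = mus ! Suc t" using shape(2) box(2) dom by simp
    show "increasing_tab T'" by (rule shape(1))
    show "ran T' \<inter> dom (\<iota>(x \<mapsto> Suc t, Suc t \<mapsto> x)) = {}"
      unfolding shape(4) dom_\<iota>' using disjoint fresh by blast
    show "ran T' \<union> dom (\<iota>(x \<mapsto> Suc t, Suc t \<mapsto> x)) = {1..Suc t}"
      unfolding shape(4) dom_\<iota>' interval_Suc cover[symmetric] using shape(3) by blast
    show "ran (\<iota>(x \<mapsto> Suc t, Suc t \<mapsto> x)) \<subseteq> {1..Suc t}"
      using ran_\<iota>' ran_\<iota> x unfolding interval_Suc by blast
  qed
qed

lemma sundaram_invariant:
  "osc_tableau r mus \<Longrightarrow> t \<le> r \<Longrightarrow> sundaram mus t = (\<iota>, T) \<Longrightarrow> sundaram_inv mus t \<iota> T"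
proof (induction t arbitrary: \<iota> T)
  case 0
  then show ?case unfolding sundaram_inv_def osc_tableau_def by (auto simp: increasing_tab_empty)
next
  case (Suc t)
  obtain \<iota>0 T0 where s: "sundaram mus t = (\<iota>0, T0)" by fastforce
  with Suc have inv: "sundaram_inv mus t \<iota>0 T0" by simp
  show ?case
  proof (cases "expansion mus (Suc t)")
    case True
    then show ?thesis
      using sundaram_inv_expansion[OF Suc.prems(1) _ inv] sundaram_expansion[OF s] Suc.prems by auto
  next
    case False
    obtain T' x where cd: "col_delete T0 (box mus (Suc t)) = (T', x)" by fastforce
    then show ?thesis
      using sundaram_inv_contraction[OF Suc.prems(1) _ inv False cd] sundaram_contraction[OF s False cd]
        Suc.prems by auto
  qed
qed

lemma sundaram_state:
  assumes "osc_tableau r mus" and "t \<le> r"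
  obtains \<iota> T where "sundaram mus t = (\<iota>, T)" "sundaram_inv mus t \<iota> T"
  using sundaram_invariant[OF assms] by (metis surj_pair)

lemma sundaram_new_value:
  assumes s: "sundaram mus (Suc m) = (\<iota>, T)"
  shows "expansion mus (Suc m) \<Longrightarrow> T (box mus (Suc m)) = Some (Suc m)"
    and "\<not> expansion mus (Suc m) \<Longrightarrow> Suc m \<in> dom \<iota>"
proof -
  obtain \<iota>0 T0 where s0: "sundaram mus m = (\<iota>0, T0)" by fastforce
  show "T (box mus (Suc m)) = Some (Suc m)" if "expansion mus (Suc m)"
    using s sundaram_expansion[OF s0 that] by simp
  show "Suc m \<in> dom \<iota>" if "\<not> expansion mus (Suc m)"
  proof -
    obtain T' x where "col_delete T0 (box mus (Suc m)) = (T', x)" by fastforce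
    then show ?thesis using s sundaram_contraction[OF s0 that] by auto
  qed
qed

section \<open>Descents\<close>

lemma Des_pair_iff: "k \<in> Des_pair (\<iota>, T) \<longleftrightarrow>
    (k \<in> dom \<iota> \<and> Suc k \<in> dom \<iota> \<and> the (\<iota> (Suc k)) < the (\<iota> k))
  \<or> (k \<in> ran T \<and> Suc k \<in> ran T \<and> row_of T k < row_of T (Suc k))
  \<or> (k \<in> ran T \<and> Suc k \<in> dom \<iota>)"
  unfolding Des_pair_def Des_inv_def Des_tab_def Des_sets_def by auto

lemma Des_pair_bounded:
  assumes "sundaram_inv mus t \<iota> T" and "k \<in> Des_pair (\<iota>, T)"
  shows "1 \<le> k" and "Suc k \<le> t"
proof -
  have "k \<in> ran T \<union> dom \<iota>" "Suc k \<in> ran T \<union> dom \<iota>" using assms(2) unfolding Des_pair_iff by auto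
  then have "k \<in> {1..t}" "Suc k \<in> {1..t}" using assms(1) unfolding sundaram_inv_def by blast+
  then show "1 \<le> k" "Suc k \<le> t" by simp_all
qed

lemma Des_pair_extend:
  assumes "T b = None" and "n \<noteq> k" and "n \<noteq> Suc k"
  shows "k \<in> Des_pair (\<iota>, T(b \<mapsto> n)) \<longleftrightarrow> k \<in> Des_pair (\<iota>, T)"
proof -
  have "row_of (T(b \<mapsto> n)) w = row_of T w" if "w \<noteq> n" for w
    by (rule row_of_cong) (use assms(1) that in auto)
  moreover have "ran (T(b \<mapsto> n)) = insert n (ran T)" using assms(1) by (rule ran_map_upd)
  ultimately show ?thesis unfolding Des_pair_iff using assms(2,3) by simp
qed

lemma Des_pair_pairing:
  assumes disjoint: "ran T \<inter> dom \<iota> = {}" and k: "k \<in> ran T \<union> dom \<iota>" "Suc k \<in> ran T \<union> dom \<iota>"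
    and x: "x \<in> ran T" and ran: "ran T' = ran T - {x}"
    and n: "n \<notin> ran T \<union> dom \<iota>" and less_n: "\<And>v. v \<in> ran \<iota> \<Longrightarrow> v < n"
    and keep: "k \<in> ran T \<Longrightarrow> Suc k \<in> ran T \<Longrightarrow> x \<noteq> k \<Longrightarrow> x \<noteq> Suc k \<Longrightarrow>
      row_of T' k < row_of T' (Suc k) \<longleftrightarrow> row_of T k < row_of T (Suc k)"
    and up: "k \<in> ran T \<Longrightarrow> Suc k \<in> ran T \<Longrightarrow> x = Suc k \<Longrightarrow> row_of T k < row_of T (Suc k)"
    and down: "k \<in> ran T \<Longrightarrow> Suc k \<in> ran T \<Longrightarrow> x = k \<Longrightarrow> \<not> row_of T k < row_of T (Suc k)"
  shows "k \<in> Des_pair (\<iota>(x \<mapsto> n, n \<mapsto> x), T') \<longleftrightarrow> k \<in> Des_pair (\<iota>, T)"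
proof -
  have nk: "n \<noteq> k" "n \<noteq> Suc k" and "x \<notin> dom \<iota>" "x \<noteq> n" using k n x disjoint by auto
  have less: "the (\<iota> w) < n" if "w \<in> dom \<iota>" for w
    using less_n[OF ranI[of \<iota> w "the (\<iota> w)"]] that by auto
  consider "k \<in> dom \<iota>" "Suc k \<in> dom \<iota>" | "k \<in> dom \<iota>" "Suc k \<in> ran T"
    | "k \<in> ran T" "Suc k \<in> dom \<iota>" | "k \<in> ran T" "Suc k \<in> ran T"
    using k by blast
  then show ?thesis
  proof cases
    case 1
    then show ?thesis
      unfolding Des_pair_iff ran using disjoint nk \<open>x \<notin> dom \<iota>\<close> by auto
  next
    case 2
    then show ?thesis
      unfolding Des_pair_iff ran using disjoint nk \<open>x \<notin> dom \<iota>\<close> \<open>x \<noteq> n\<close> less[of k] by auto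
  next
    case 3
    then show ?thesis
      unfolding Des_pair_iff ran using disjoint nk \<open>x \<notin> dom \<iota>\<close> \<open>x \<noteq> n\<close> less[of "Suc k"] by auto
  next
    case 4
    then show ?thesis
      unfolding Des_pair_iff ran using disjoint nk keep up down by auto
  qed
qed

lemma Des_pair_sundaram_Suc:
  assumes osc: "osc_tableau r mus" and "t < r" and "1 \<le> k" "Suc k \<le> t"
  shows "k \<in> Des_pair (sundaram mus (Suc t)) \<longleftrightarrow> k \<in> Des_pair (sundaram mus t)"
proof -
  obtain \<iota> T where s: "sundaram mus t = (\<iota>, T)" and inv: "sundaram_inv mus t \<iota> T"
    using sundaram_state[OF osc, of t] \<open>t < r\<close> by auto
  then have T: "increasing_tab T" and disjoint: "ran T \<inter> dom \<iota> = {}"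
    and cover: "ran T \<union> dom \<iota> = {1..t}" and ran_\<iota>: "ran \<iota> \<subseteq> {1..t}"
    unfolding sundaram_inv_def by blast+
  have k: "k \<in> ran T \<union> dom \<iota>" "Suc k \<in> ran T \<union> dom \<iota>" "Suc t \<noteq> k" "Suc t \<noteq> Suc k"
    unfolding cover using assms(3,4) by auto
  show ?thesis
  proof (cases "expansion mus (Suc t)")
    case True
    have "T (box mus (Suc t)) = None"
      using osc_tableau_expansion(1)[OF osc \<open>t < r\<close> True] inv unfolding sundaram_inv_def by auto
    then show ?thesis using sundaram_expansion[OF s True] Des_pair_extend k(3,4) s by simp
  next
    case False
    obtain T' x where cd: "col_delete T (box mus (Suc t)) = (T', x)" by fastforce
    note corner = sundaram_inv_corner[OF osc \<open>t < r\<close> inv False]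
    note shape = col_delete_shape[OF T corner cd]
    note rows = col_delete_row_order[OF T corner cd]
    have fresh: "Suc t \<notin> ran T \<union> dom \<iota>" unfolding cover by simp
    have less: "v < Suc t" if "v \<in> ran \<iota>" for v
    proof -
      have "v \<in> {1..t}" using that ran_\<iota> by blast
      then show ?thesis by simp
    qed
    have "k \<in> Des_pair (\<iota>(x \<mapsto> Suc t, Suc t \<mapsto> x), T') \<longleftrightarrow> k \<in> Des_pair (\<iota>, T)"
      by (rule Des_pair_pairing[OF disjoint k(1,2) shape(3,4) fresh less rows[of k]])
    then show ?thesis using sundaram_contraction[OF s False cd] s by simp
  qed
qed

lemma Des_pair_sundaram_stable:
  assumes osc: "osc_tableau r mus" and "t \<le> r" and "1 \<le> k" "Suc k \<le> t"
  shows "k \<in> Des_pair (sundaram mus t) \<longleftrightarrow> k \<in> Des_pair (sundaram mus (Suc k))"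
  using assms(4,2)
proof (induction t rule: dec_induct)
  case (step t)
  then show ?case using Des_pair_sundaram_Suc[OF osc _ \<open>1 \<le> k\<close>, of t] by simp
qed simp

lemma Des_pair_sundaram_expansion:
  assumes osc: "osc_tableau r mus" and "Suc k \<le> r" and "1 \<le> k" and exp: "expansion mus (Suc k)"
  shows "k \<in> Des_pair (sundaram mus (Suc k)) \<longleftrightarrow> expansion mus k \<and> fst (box mus k) < fst (box mus (Suc k))"
proof -
  obtain m where k: "k = Suc m" using \<open>1 \<le> k\<close> by (cases k) auto
  obtain \<iota> T where s: "sundaram mus k = (\<iota>, T)" and inv: "sundaram_inv mus k \<iota> T"
    using sundaram_state[OF osc, of k] \<open>Suc k \<le> r\<close> by auto
  then have T: "increasing_tab T" and disjoint: "ran T \<inter> dom \<iota> = {}"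
    and cover: "ran T \<union> dom \<iota> = {1..k}"
    unfolding sundaram_inv_def by blast+
  note last = sundaram_new_value[OF s[unfolded k]]
  let ?b = "box mus (Suc k)" and ?T = "T(box mus (Suc k) \<mapsto> Suc k)"
  have new: "T ?b = None"
    using osc_tableau_expansion(1)[OF osc _ exp] inv \<open>Suc k \<le> r\<close> unfolding sundaram_inv_def by auto
  have T': "increasing_tab ?T"
    using sundaram_inv_expansion[OF osc _ inv exp] \<open>Suc k \<le> r\<close> unfolding sundaram_inv_def by simp
  have "Suc k \<notin> ran T \<union> dom \<iota>" unfolding cover by simp
  then have "Suc k \<notin> dom \<iota>" by blast
  moreover have "row_of ?T (Suc k) = fst ?b" using row_of_eq[OF T', of "fst ?b" "snd ?b"] by simp
  moreover have "row_of ?T k = row_of T k" by (rule row_of_cong) (use new in auto)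
  moreover have "k \<in> ran T \<longleftrightarrow> expansion mus k"
    using last disjoint k by (cases "expansion mus k") (auto intro: ranI)
  moreover have "row_of T k = fst (box mus k)" if "expansion mus k"
    using last that k row_of_eq[OF T, of "fst (box mus k)" "snd (box mus k)"] by simp
  ultimately show ?thesis
    unfolding sundaram_expansion[OF s exp] Des_pair_iff using new by (auto simp: ran_map_upd)
qed

lemma Des_pair_sundaram_two_contractions:
  assumes osc: "osc_tableau r mus" and "Suc k \<le> r" and "1 \<le> k"
    and con1: "\<not> expansion mus k" and con2: "\<not> expansion mus (Suc k)"
  shows "k \<in> Des_pair (sundaram mus (Suc k)) \<longleftrightarrow> fst (box mus (Suc k)) < fst (box mus k)"
proof -
  obtain m where k: "k = Suc m" using \<open>1 \<le> k\<close> by (cases k) auto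
  have "k < r" "m < r" using \<open>Suc k \<le> r\<close> k by simp_all
  obtain \<iota>0 T0 where s0: "sundaram mus m = (\<iota>0, T0)" and inv0: "sundaram_inv mus m \<iota>0 T0"
    using sundaram_state[OF osc, of m] \<open>m < r\<close> by auto
  obtain T1 x1 where cd1: "col_delete T0 (box mus k) = (T1, x1)" by fastforce
  let ?\<iota> = "\<iota>0(x1 \<mapsto> k, k \<mapsto> x1)"
  have s1: "sundaram mus k = (?\<iota>, T1)"
    using sundaram_contraction[OF s0 con1[unfolded k] cd1[unfolded k]] k by simp
  have inv1: "sundaram_inv mus k ?\<iota> T1" using sundaram_invariant[OF osc _ s1] \<open>k < r\<close> by simp
  note corner1 = sundaram_inv_corner[OF osc \<open>m < r\<close> inv0 con1[unfolded k], folded k]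
  note corner2 = sundaram_inv_corner[OF osc \<open>k < r\<close> inv1 con2]
  obtain T2 x2 where cd2: "col_delete T1 (box mus (Suc k)) = (T2, x2)" by fastforce
  let ?\<iota>2 = "?\<iota>(x2 \<mapsto> Suc k, Suc k \<mapsto> x2)"
  have "x2 \<in> ran T1" using col_delete_shape(3)[OF _ corner2 cd2] inv1 unfolding sundaram_inv_def by blast
  then have "x2 \<noteq> k" using inv1 unfolding sundaram_inv_def by auto
  then have \<iota>2: "?\<iota>2 k = Some x1" "?\<iota>2 (Suc k) = Some x2" by simp_all
  have "sundaram_inv mus (Suc k) ?\<iota>2 T2" by (rule sundaram_inv_contraction[OF osc \<open>k < r\<close> inv1 con2 cd2])
  moreover have "k \<in> dom ?\<iota>2" "Suc k \<in> dom ?\<iota>2" using \<iota>2 by blast+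
  ultimately have "k \<notin> ran T2" "Suc k \<notin> ran T2" unfolding sundaram_inv_def by blast+
  then have descent: "k \<in> Des_pair (sundaram mus (Suc k)) \<longleftrightarrow> x2 < x1"
    unfolding sundaram_contraction[OF s1 con2 cd2] Des_pair_iff using \<iota>2 by (auto split: if_splits)
  obtain i1 j1 i2 j2 where b: "box mus k = (i1, j1)" "box mus (Suc k) = (i2, j2)" by fastforce
  have "dom T1 = dom T0 - {box mus k}"
    using inv1 inv0 osc_tableau_contraction(2)[OF osc \<open>m < r\<close> con1[unfolded k]] k
    unfolding sundaram_inv_def by simp
  then interpret successive_col_deletions T0 T1 T2 i1 j1 i2 j2 x1 x2
    using inv0 corner1 corner2 cd1 cd2 b unfolding sundaram_inv_def by unfold_locales auto
  show ?thesis using descent output_less_iff_higher b by simp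
qed

lemma Des_pair_sundaram_contraction:
  assumes osc: "osc_tableau r mus" and "Suc k \<le> r" and "1 \<le> k" and con: "\<not> expansion mus (Suc k)"
  shows "k \<in> Des_pair (sundaram mus (Suc k)) \<longleftrightarrow> expansion mus k \<or> fst (box mus (Suc k)) < fst (box mus k)"
proof (cases "expansion mus k")
  case True
  obtain m where k: "k = Suc m" using \<open>1 \<le> k\<close> by (cases k) auto
  obtain \<iota> T where s: "sundaram mus k = (\<iota>, T)" and inv: "sundaram_inv mus k \<iota> T"
    using sundaram_state[OF osc, of k] \<open>Suc k \<le> r\<close> by auto
  have "k < r" using \<open>Suc k \<le> r\<close> by simp
  obtain T2 x2 where cd2: "col_delete T (box mus (Suc k)) = (T2, x2)" by fastforce
  have "ran T2 = ran T - {x2}"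
    using col_delete_shape(4)[OF _ sundaram_inv_corner[OF osc \<open>k < r\<close> inv con] cd2] inv
    unfolding sundaram_inv_def by blast
  moreover have "k \<in> ran T"
    using sundaram_new_value(1)[OF s[unfolded k]] True k by (auto intro: ranI)
  ultimately show ?thesis
    unfolding sundaram_contraction[OF s con cd2] Des_pair_iff using True by (cases "x2 = k") auto
next
  case False
  then show ?thesis
    using Des_pair_sundaram_two_contractions[OF osc \<open>Suc k \<le> r\<close> \<open>1 \<le> k\<close> False con] by simp
qed

lemma Des_osc_iff:
  assumes osc: "osc_tableau r mus" and "1 \<le> k" and "Suc k \<le> r"
  shows "k \<in> Des_osc r mus \<longleftrightarrow>
    (if expansion mus (Suc k) then expansion mus k \<and> fst (box mus k) < fst (box mus (Suc k))
     else expansion mus k \<or> fst (box mus (Suc k)) < fst (box mus k))"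
proof -
  have "k - 1 < r" "Suc (k - 1) = k" using assms(2,3) by auto
  then have "contraction mus k \<longleftrightarrow> \<not> expansion mus k"
    "contraction mus (Suc k) \<longleftrightarrow> \<not> expansion mus (Suc k)"
    using osc_tableau_contraction_iff[OF osc, of "k - 1"] osc_tableau_contraction_iff[OF osc, of k]
      \<open>Suc k \<le> r\<close> by simp_all
  then show ?thesis unfolding Des_osc_def Suc_eq_plus1[symmetric] using assms(2,3) by auto
qed

theorem proposition6p3:
  assumes "osc_tableau r mus"
  shows "Des_osc r mus = Des_pair (sundaram mus r)"
proof (rule set_eqI)
  fix k
  show "k \<in> Des_osc r mus \<longleftrightarrow> k \<in> Des_pair (sundaram mus r)"
  proof (cases "1 \<le> k \<and> Suc k \<le> r")
    case True
    then have "k \<in> Des_osc r mus \<longleftrightarrow> k \<in> Des_pair (sundaram mus (Suc k))"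
      using Des_osc_iff[OF assms] Des_pair_sundaram_expansion[OF assms] Des_pair_sundaram_contraction[OF assms]
      by presburger
    also have "\<dots> \<longleftrightarrow> k \<in> Des_pair (sundaram mus r)"
      using Des_pair_sundaram_stable[OF assms order_refl] True by simp
    finally show ?thesis .
  next
    case False
    obtain \<iota> T where "sundaram mus r = (\<iota>, T)" "sundaram_inv mus r \<iota> T"
      using sundaram_state[OF assms order_refl] .
    then show ?thesis using False Des_pair_bounded unfolding Des_osc_def by fastforce
  qed
qed

end
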